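(* Let $Q$ be a polyhedral partially ordered abelian group and $D\subseteq Q$ a downset. Then $D=\bigcup_\tau P_\tau(D)$, the union over all faces $\tau$ of $Q_+$ for which $\Gamma_\tau(D_\tau)$ is nonempty, and this is a primary decomposition of $D$ (each $P_\tau(D)$ is a coprimary downset).
   Context: A partially ordered abelian group is an abelian group $Q$ generated by a submonoid $Q_+$ (positive cone) whose only unit is $0$; $q\preceq q'$ iff $q'-q\in Q_+$. A face is a submonoid $\sigma\subseteq Q_+$ such that $Q_+\setminus\sigma$ is an ideal of the monoid $Q_+$; $Q$ is polyhedral if there are finitely many faces. A downset is a subset $D\subseteq Q$ with $D-Q_+=D$. For a face $\tau$: $D_\tau=\{q\in D: q+\tau\subseteq D\}$; $q\in D$ is globally supported on $\tau$ if $q\notin D_{\tau'}$ for all faces $\tau'\not\subseteq\tau$, and $\Gamma_\tau D$ is the set of such $q$; the local $\tau$-support is $\Gamma_\tau(D_\tau)$ (elements of $D_\tau$ globally supported on $\tau$ within the downset $D_\tau$); the $\tau$-primary component is the downset $P_\tau(D)=\Gamma_\tau(D_\tau)-Q_+$. A downset $D$ is coprimary ($\tau$-coprimary) if $D=P_\tau(D)$ for some face $\tau$. A primary decomposition of $D$ is an expression $D=\bigcup_{i=1}^r D_i$ with each $D_i$ a coprimary downset. *)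

theory Defs
  imports Main
begin

text \<open>A partially ordered abelian group: the ambient abelian group is the type 'a,
  with positive cone Qp, a submonoid whose only unit is 0 and which generates 'a.\<close>
definition pogroup :: "('a::ab_group_add) set \<Rightarrow> bool" where
  "pogroup Qp \<longleftrightarrow> 0 \<in> Qp \<and> (\<forall>x\<in>Qp. \<forall>y\<in>Qp. x + y \<in> Qp)
     \<and> (\<forall>x\<in>Qp. - x \<in> Qp \<longrightarrow> x = 0)
     \<and> (\<forall>q. \<exists>a\<in>Qp. \<exists>b\<in>Qp. q = a - b)"

definition face :: "('a::ab_group_add) set \<Rightarrow> 'a set \<Rightarrow> bool" where
  "face Qp \<sigma> \<longleftrightarrow> \<sigma> \<subseteq> Qp \<and> 0 \<in> \<sigma> \<and> (\<forall>x\<in>\<sigma>. \<forall>y\<in>\<sigma>. x + y \<in> \<sigma>)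
     \<and> (\<forall>x\<in>Qp - \<sigma>. \<forall>y\<in>Qp. x + y \<in> Qp - \<sigma>)"

definition polyhedral :: "('a::ab_group_add) set \<Rightarrow> bool" where
  "polyhedral Qp \<longleftrightarrow> finite {\<sigma>. face Qp \<sigma>}"

definition downset :: "('a::ab_group_add) set \<Rightarrow> 'a set \<Rightarrow> bool" where
  "downset Qp D \<longleftrightarrow> {d - p | d p. d \<in> D \<and> p \<in> Qp} = D"

definition face_part :: "('a::ab_group_add) set \<Rightarrow> 'a set \<Rightarrow> 'a set" where
  "face_part D \<tau> = {q \<in> D. \<forall>t\<in>\<tau>. q + t \<in> D}"

definition glob_supp :: "('a::ab_group_add) set \<Rightarrow> 'a set \<Rightarrow> 'a set \<Rightarrow> 'a set" where
  "glob_supp Qp \<tau> D = {q \<in> D. \<forall>\<tau>'. face Qp \<tau>' \<and> \<not> \<tau>' \<subseteq> \<tau> \<longrightarrow> q \<notin> face_part D \<tau>'}"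

definition local_supp :: "('a::ab_group_add) set \<Rightarrow> 'a set \<Rightarrow> 'a set \<Rightarrow> 'a set" where
  "local_supp Qp \<tau> D = glob_supp Qp \<tau> (face_part D \<tau>)"

definition primary_comp :: "('a::ab_group_add) set \<Rightarrow> 'a set \<Rightarrow> 'a set \<Rightarrow> 'a set" where
  "primary_comp Qp \<tau> D = {g - p | g p. g \<in> local_supp Qp \<tau> D \<and> p \<in> Qp}"

definition coprimary :: "('a::ab_group_add) set \<Rightarrow> 'a set \<Rightarrow> bool" where
  "coprimary Qp D \<longleftrightarrow> downset Qp D \<and> (\<exists>\<tau>. face Qp \<tau> \<and> D = primary_comp Qp \<tau> D)"

definition primary_decomposition :: "('a::ab_group_add) set \<Rightarrow> 'a set \<Rightarrow> 'a set set \<Rightarrow> bool" where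
  "primary_decomposition Qp D Ds \<longleftrightarrow> finite Ds \<and> D = \<Union>Ds \<and> (\<forall>E\<in>Ds. coprimary Qp E)"

end

theory Submission
  imports Defs
begin

text \<open>Every q \<in> D lies in the local support of some face: among the finitely many faces \<tau>
  with q \<in> D_\<tau> take a maximal one. If q also lay in (D_\<tau>)_\<tau>' for a face \<tau>' not contained
  in \<tau>, then q \<in> D_\<sigma> for the face \<sigma> generated by \<tau> and \<tau>', contradicting maximality.
  For coprimarity: every D_\<tau>' is again a downset, so the local \<tau>-support of D is closed under
  adding elements of \<tau>. Hence it lies in (D')_\<tau> for D' = P_\<tau>(D), and it remains globally
  supported on \<tau> inside the smaller downset D'. So P_\<tau>(D') contains P_\<tau>(D) = D'.\<close>

lemma pogroup_zero: "pogroup Qp \<Longrightarrow> 0 \<in> Qp"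
  and pogroup_add: "pogroup Qp \<Longrightarrow> x \<in> Qp \<Longrightarrow> y \<in> Qp \<Longrightarrow> x + y \<in> Qp"
  unfolding pogroup_def by auto

lemma face_subset: "face Qp \<tau> \<Longrightarrow> \<tau> \<subseteq> Qp"
  and face_zero: "face Qp \<tau> \<Longrightarrow> 0 \<in> \<tau>"
  and face_add: "face Qp \<tau> \<Longrightarrow> x \<in> \<tau> \<Longrightarrow> y \<in> \<tau> \<Longrightarrow> x + y \<in> \<tau>"
  unfolding face_def by auto

lemma face_zero_set: "pogroup Qp \<Longrightarrow> face Qp {0}"
  unfolding pogroup_def face_def by (auto simp: add_eq_0_iff)

definition face_join :: "('a::ab_group_add) set \<Rightarrow> 'a set \<Rightarrow> 'a set \<Rightarrow> 'a set" where
  "face_join Qp \<tau> \<tau>' = {x \<in> Qp. \<exists>y\<in>Qp. \<exists>a\<in>\<tau>. \<exists>b\<in>\<tau>'. x + y = a + b}"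

lemma face_face_join:
  assumes Q: "pogroup Qp" and \<tau>: "face Qp \<tau>" and \<tau>': "face Qp \<tau>'"
  shows "face Qp (face_join Qp \<tau> \<tau>')"
  unfolding face_def
proof (intro conjI ballI)
  let ?F = "face_join Qp \<tau> \<tau>'"
  show "?F \<subseteq> Qp"
    by (auto simp: face_join_def)
  show "0 \<in> ?F"
    using pogroup_zero[OF Q] face_zero[OF \<tau>] face_zero[OF \<tau>'] by (force simp: face_join_def)
  fix x x' assume "x \<in> ?F" "x' \<in> ?F"
  then obtain y a b y' a' b' where
    "x \<in> Qp" "y \<in> Qp" "a \<in> \<tau>" "b \<in> \<tau>'" "x + y = a + b"
    "x' \<in> Qp" "y' \<in> Qp" "a' \<in> \<tau>" "b' \<in> \<tau>'" "x' + y' = a' + b'"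
    by (auto simp: face_join_def)
  moreover from this have "(x + x') + (y + y') = (a + a') + (b + b')"
    by (simp add: algebra_simps)
  ultimately show "x + x' \<in> ?F"
    unfolding face_join_def using pogroup_add[OF Q] face_add[OF \<tau>] face_add[OF \<tau>'] by blast
next
  let ?F = "face_join Qp \<tau> \<tau>'"
  fix x y assume x: "x \<in> Qp - ?F" and y: "y \<in> Qp"
  have "x \<in> ?F" if "x + y \<in> ?F"
  proof -
    from that obtain z a b where "z \<in> Qp" "a \<in> \<tau>" "b \<in> \<tau>'" "x + (y + z) = a + b"
      by (auto simp: face_join_def add.assoc)
    with x y show ?thesis
      unfolding face_join_def using pogroup_add[OF Q] by blast
  qed
  with x y show "x + y \<in> Qp - ?F"
    using pogroup_add[OF Q] by blast
qed

lemma face_join_upper1: "pogroup Qp \<Longrightarrow> face Qp \<tau>' \<Longrightarrow> \<tau> \<subseteq> Qp \<Longrightarrow> \<tau> \<subseteq> face_join Qp \<tau> \<tau>'"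
  unfolding face_join_def using pogroup_zero face_zero by fastforce

lemma face_join_upper2: "pogroup Qp \<Longrightarrow> face Qp \<tau> \<Longrightarrow> \<tau>' \<subseteq> Qp \<Longrightarrow> \<tau>' \<subseteq> face_join Qp \<tau> \<tau>'"
  unfolding face_join_def using pogroup_zero face_zero by (fastforce simp: add.commute)

lemma downsetD: "downset Qp D \<Longrightarrow> d \<in> D \<Longrightarrow> p \<in> Qp \<Longrightarrow> d - p \<in> D"
  unfolding downset_def by blast

lemma downsetI: "pogroup Qp \<Longrightarrow> (\<And>d p. d \<in> D \<Longrightarrow> p \<in> Qp \<Longrightarrow> d - p \<in> D) \<Longrightarrow> downset Qp D"
  unfolding downset_def using pogroup_zero by force

lemma face_part_subset: "face_part D \<tau> \<subseteq> D"
  unfolding face_part_def by auto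

lemma face_part_mono: "A \<subseteq> B \<Longrightarrow> face_part A \<tau> \<subseteq> face_part B \<tau>"
  unfolding face_part_def by auto

lemma downset_face_part:
  assumes "pogroup Qp" and D: "downset Qp D"
  shows "downset Qp (face_part D \<tau>)"
proof (rule downsetI[OF assms(1)])
  fix d p assume d: "d \<in> face_part D \<tau>" and p: "p \<in> Qp"
  have "d - p + t \<in> D" if "t \<in> \<tau>" for t
  proof -
    have "d + t - p \<in> D"
      using downsetD[OF D _ p] d that by (simp add: face_part_def)
    then show ?thesis
      by (simp add: diff_add_eq)
  qed
  with d p show "d - p \<in> face_part D \<tau>"
    using downsetD[OF D] by (simp add: face_part_def)
qed

lemma face_part_face_part_subset:
  assumes "downset Qp D"
  shows "face_part (face_part D \<tau>) \<tau>' \<subseteq> face_part D (face_join Qp \<tau> \<tau>')"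
proof
  fix q assume q: "q \<in> face_part (face_part D \<tau>) \<tau>'"
  have "q + x \<in> D" if "x \<in> face_join Qp \<tau> \<tau>'" for x
  proof -
    from that obtain y a b where y: "y \<in> Qp" and "a \<in> \<tau>" "b \<in> \<tau>'" and xy: "x + y = a + b"
      by (auto simp: face_join_def)
    with q have "q + b + a \<in> D"
      by (auto simp: face_part_def)
    with y have "q + b + a - y \<in> D"
      using downsetD[OF assms] by blast
    also have "q + b + a - y = q + x"
      using xy by (simp add: algebra_simps flip: eq_diff_eq)
    finally show ?thesis .
  qed
  with q show "q \<in> face_part D (face_join Qp \<tau> \<tau>')"
    unfolding face_part_def by blast
qed

lemma ex_face_local_supp:
  assumes Q: "pogroup Qp" and poly: "polyhedral Qp" and D: "downset Qp D" and q: "q \<in> D"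
  shows "\<exists>\<tau>. face Qp \<tau> \<and> q \<in> local_supp Qp \<tau> D"
proof -
  let ?S = "{\<tau>. face Qp \<tau> \<and> q \<in> face_part D \<tau>}"
  have "finite ?S"
    using poly unfolding polyhedral_def by (rule finite_subset[rotated]) blast
  moreover have "?S \<noteq> {}"
    using face_zero_set[OF Q] q by (auto simp: face_part_def)
  ultimately have "\<exists>\<tau>\<in>?S. \<forall>\<sigma>\<in>?S. \<tau> \<subseteq> \<sigma> \<longrightarrow> \<tau> = \<sigma>"
    by (rule finite_has_maximal)
  then obtain \<tau> where "\<tau> \<in> ?S" and maximal: "\<forall>\<sigma>\<in>?S. \<tau> \<subseteq> \<sigma> \<longrightarrow> \<tau> = \<sigma>" ..
  then have \<tau>: "face Qp \<tau>" and q\<tau>: "q \<in> face_part D \<tau>"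
    by simp_all
  have "q \<notin> face_part (face_part D \<tau>) \<tau>'" if \<tau>': "face Qp \<tau>'" "\<not> \<tau>' \<subseteq> \<tau>" for \<tau>'
  proof
    let ?\<sigma> = "face_join Qp \<tau> \<tau>'"
    assume "q \<in> face_part (face_part D \<tau>) \<tau>'"
    then have "?\<sigma> \<in> ?S"
      using face_part_face_part_subset[OF D] face_face_join[OF Q \<tau> \<tau>'(1)] by blast
    moreover have "\<tau> \<subseteq> ?\<sigma>"
      using face_join_upper1[OF Q \<tau>'(1) face_subset[OF \<tau>]] .
    ultimately have "\<tau> = ?\<sigma>"
      using maximal by blast
    then have "\<tau>' \<subseteq> \<tau>"
      using face_join_upper2[OF Q \<tau> face_subset[OF \<tau>'(1)]] by simp
    with \<tau>'(2) show False ..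
  qed
  with \<tau> q\<tau> show ?thesis
    unfolding local_supp_def glob_supp_def by blast
qed

lemma glob_supp_add:
  assumes "pogroup Qp" "downset Qp E" "g \<in> glob_supp Qp \<tau> E" "t \<in> Qp" "g + t \<in> E"
  shows "g + t \<in> glob_supp Qp \<tau> E"
proof -
  have "g \<in> face_part E \<tau>'" if "g + t \<in> face_part E \<tau>'" for \<tau>'
    using downsetD[OF downset_face_part[OF assms(1,2)] that assms(4)] by simp
  with assms(3,5) show ?thesis
    unfolding glob_supp_def by blast
qed

lemma local_supp_subset: "local_supp Qp \<tau> D \<subseteq> face_part D \<tau>"
  unfolding local_supp_def glob_supp_def by blast

lemma local_supp_add:
  assumes Q: "pogroup Qp" and D: "downset Qp D" and \<tau>: "face Qp \<tau>"
    and g: "g \<in> local_supp Qp \<tau> D" and t: "t \<in> \<tau>"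
  shows "g + t \<in> local_supp Qp \<tau> D"
proof -
  have g\<tau>: "g \<in> face_part D \<tau>"
    using g local_supp_subset ..
  have "g + t + s \<in> D" if "s \<in> \<tau>" for s
    using g\<tau> face_add[OF \<tau> t that] unfolding face_part_def by (simp add: add.assoc)
  moreover have "g + t \<in> D"
    using g\<tau> t unfolding face_part_def by blast
  ultimately have "g + t \<in> face_part D \<tau>"
    unfolding face_part_def by blast
  moreover have "t \<in> Qp"
    using face_subset[OF \<tau>] t ..
  ultimately show ?thesis
    using glob_supp_add[OF Q downset_face_part[OF Q D]] g unfolding local_supp_def by blast
qed

lemma glob_supp_subset:
  assumes "A \<subseteq> B"
  shows "A \<inter> glob_supp Qp \<tau> B \<subseteq> glob_supp Qp \<tau> A"
  using face_part_mono[OF assms] unfolding glob_supp_def by blast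

definition down_closure :: "('a::ab_group_add) set \<Rightarrow> 'a set \<Rightarrow> 'a set" where
  "down_closure Qp G = {g - p | g p. g \<in> G \<and> p \<in> Qp}"

lemma primary_comp_eq_down_closure: "primary_comp Qp \<tau> D = down_closure Qp (local_supp Qp \<tau> D)"
  unfolding primary_comp_def down_closure_def ..

lemma subset_down_closure:
  assumes "pogroup Qp"
  shows "G \<subseteq> down_closure Qp G"
proof
  fix g assume "g \<in> G"
  moreover have "g = g - 0" "0 \<in> Qp"
    using pogroup_zero[OF assms] by simp_all
  ultimately show "g \<in> down_closure Qp G"
    unfolding down_closure_def by blast
qed

lemma down_closure_mono: "G \<subseteq> H \<Longrightarrow> down_closure Qp G \<subseteq> down_closure Qp H"
  unfolding down_closure_def by blast

lemma down_closure_least: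
  assumes "downset Qp D" and "G \<subseteq> D"
  shows "down_closure Qp G \<subseteq> D"
  using downsetD[OF assms(1)] assms(2) unfolding down_closure_def by blast

lemma downset_down_closure:
  assumes Q: "pogroup Qp"
  shows "downset Qp (down_closure Qp G)"
proof (rule downsetI[OF Q])
  fix d p assume "d \<in> down_closure Qp G" "p \<in> Qp"
  then obtain g p' where "g \<in> G" "p' \<in> Qp" "d - p = g - (p' + p)"
    by (auto simp: down_closure_def)
  with \<open>p \<in> Qp\<close> show "d - p \<in> down_closure Qp G"
    unfolding down_closure_def using pogroup_add[OF Q] by blast
qed

lemma local_supp_subset_primary_comp: "pogroup Qp \<Longrightarrow> local_supp Qp \<tau> D \<subseteq> primary_comp Qp \<tau> D"
  unfolding primary_comp_eq_down_closure by (rule subset_down_closure)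

lemma primary_comp_subset:
  assumes "downset Qp D"
  shows "primary_comp Qp \<tau> D \<subseteq> D"
proof -
  have "local_supp Qp \<tau> D \<subseteq> D"
    using local_supp_subset face_part_subset by (rule subset_trans)
  then show ?thesis
    unfolding primary_comp_eq_down_closure by (rule down_closure_least[OF assms])
qed

lemma downset_primary_comp: "pogroup Qp \<Longrightarrow> downset Qp (primary_comp Qp \<tau> D)"
  unfolding primary_comp_eq_down_closure by (rule downset_down_closure)

lemma local_supp_subset_local_supp_primary_comp:
  assumes Q: "pogroup Qp" and D: "downset Qp D" and \<tau>: "face Qp \<tau>"
  shows "local_supp Qp \<tau> D \<subseteq> local_supp Qp \<tau> (primary_comp Qp \<tau> D)"
proof
  let ?E = "primary_comp Qp \<tau> D"
  fix g assume g: "g \<in> local_supp Qp \<tau> D"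
  have "g + t \<in> ?E" if "t \<in> \<tau>" for t
    using local_supp_add[OF Q D \<tau> g that] local_supp_subset_primary_comp[OF Q] ..
  moreover have "g \<in> ?E"
    using g local_supp_subset_primary_comp[OF Q] ..
  ultimately have "g \<in> face_part ?E \<tau>"
    unfolding face_part_def by blast
  moreover have "face_part ?E \<tau> \<subseteq> face_part D \<tau>"
    using face_part_mono[OF primary_comp_subset[OF D]] .
  ultimately show "g \<in> local_supp Qp \<tau> ?E"
    using g glob_supp_subset[of "face_part ?E \<tau>" "face_part D \<tau>" Qp \<tau>]
    unfolding local_supp_def by blast
qed

lemma coprimary_primary_comp:
  assumes Q: "pogroup Qp" and D: "downset Qp D" and \<tau>: "face Qp \<tau>"
  shows "coprimary Qp (primary_comp Qp \<tau> D)"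
proof -
  let ?E = "primary_comp Qp \<tau> D"
  have E: "downset Qp ?E"
    using downset_primary_comp[OF Q] .
  have "down_closure Qp (local_supp Qp \<tau> D) \<subseteq> down_closure Qp (local_supp Qp \<tau> ?E)"
    using local_supp_subset_local_supp_primary_comp[OF Q D \<tau>] by (rule down_closure_mono)
  then have "?E \<subseteq> primary_comp Qp \<tau> ?E"
    by (simp only: primary_comp_eq_down_closure)
  with primary_comp_subset[OF E] have "?E = primary_comp Qp \<tau> ?E"
    by (rule subset_antisym[rotated])
  with E \<tau> show ?thesis
    unfolding coprimary_def by blast
qed

lemma downset_eq_Union_primary_comp:
  assumes "pogroup Qp" and "polyhedral Qp" and "downset Qp D"
  shows "D = \<Union>{primary_comp Qp \<tau> D | \<tau>. face Qp \<tau> \<and> local_supp Qp \<tau> D \<noteq> {}}"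
    (is "D = \<Union>?Ds")
proof (rule subset_antisym)
  show "D \<subseteq> \<Union>?Ds"
  proof
    fix q assume "q \<in> D"
    then obtain \<tau> where "face Qp \<tau>" and q: "q \<in> local_supp Qp \<tau> D"
      using ex_face_local_supp[OF assms] by blast
    then have "primary_comp Qp \<tau> D \<in> ?Ds"
      by blast
    moreover have "q \<in> primary_comp Qp \<tau> D"
      using q local_supp_subset_primary_comp[OF assms(1)] ..
    ultimately show "q \<in> \<Union>?Ds" ..
  qed
  show "\<Union>?Ds \<subseteq> D"
    using primary_comp_subset[OF assms(3)] by blast
qed

theorem corollary3p11:
  fixes Qp :: "('a::ab_group_add) set" and D :: "'a set"
  assumes "pogroup Qp" and "polyhedral Qp" and "downset Qp D"
  shows "D = \<Union>{primary_comp Qp \<tau> D | \<tau>. face Qp \<tau> \<and> local_supp Qp \<tau> D \<noteq> {}}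
    \<and> primary_decomposition Qp D
        {primary_comp Qp \<tau> D | \<tau>. face Qp \<tau> \<and> local_supp Qp \<tau> D \<noteq> {}}"
proof -
  let ?Ds = "{primary_comp Qp \<tau> D | \<tau>. face Qp \<tau> \<and> local_supp Qp \<tau> D \<noteq> {}}"
  have union: "D = \<Union>?Ds"
    using assms by (rule downset_eq_Union_primary_comp)
  have "?Ds \<subseteq> (\<lambda>\<tau>. primary_comp Qp \<tau> D) ` {\<tau>. face Qp \<tau>}"
    by blast
  then have "finite ?Ds"
    using assms(2) unfolding polyhedral_def by (rule finite_surj[rotated])
  moreover have "\<forall>E\<in>?Ds. coprimary Qp E"
    using coprimary_primary_comp[OF assms(1,3)] by blast
  ultimately show ?thesis
    unfolding primary_decomposition_def using union by (intro conjI)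
qed

end
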